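(* For any finite tree $T$ and any integer $k\geq 1$, $\mathrm{box}(T^k)\leq k+1$.
   Context: $T^k$ is the $k$-th power of $T$: the graph on $V(T)$ in which distinct $u,v$ are adjacent iff their distance in $T$ is at most $k$. The boxicity $\mathrm{box}(G)$ of a graph $G$ is the minimum integer $t$ such that $G$ is the intersection graph of axis-parallel $t$-dimensional boxes (Cartesian products of $t$ closed real intervals), i.e. there is a map $f$ from $V(G)$ to such boxes with $(u,v)\in E(G)\iff f(u)\cap f(v)\neq\emptyset$ for distinct $u,v$. *)

theory Defs
  imports Main "HOL-Library.Extended_Real"
begin

definition simple_graph :: "'a set \<Rightarrow> ('a \<Rightarrow> 'a \<Rightarrow> bool) \<Rightarrow> bool" where
  "simple_graph V E \<longleftrightarrow> (\<forall>u v. E u v \<longrightarrow> u \<in> V \<and> v \<in> V \<and> u \<noteq> v \<and> E v u)"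

definition walk :: "'a set \<Rightarrow> ('a \<Rightarrow> 'a \<Rightarrow> bool) \<Rightarrow> 'a list \<Rightarrow> 'a \<Rightarrow> 'a \<Rightarrow> bool" where
  "walk V E xs u v \<longleftrightarrow> xs \<noteq> [] \<and> hd xs = u \<and> last xs = v \<and> set xs \<subseteq> V \<and>
     (\<forall>i. i + 1 < length xs \<longrightarrow> E (xs ! i) (xs ! (i + 1)))"

definition connected_graph :: "'a set \<Rightarrow> ('a \<Rightarrow> 'a \<Rightarrow> bool) \<Rightarrow> bool" where
  "connected_graph V E \<longleftrightarrow> (\<forall>u\<in>V. \<forall>v\<in>V. \<exists>xs. walk V E xs u v)"

definition is_cycle :: "'a set \<Rightarrow> ('a \<Rightarrow> 'a \<Rightarrow> bool) \<Rightarrow> 'a list \<Rightarrow> bool" where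
  "is_cycle V E xs \<longleftrightarrow> length xs \<ge> 3 \<and> distinct xs \<and> walk V E xs (hd xs) (last xs) \<and> E (last xs) (hd xs)"

definition acyclic_graph :: "'a set \<Rightarrow> ('a \<Rightarrow> 'a \<Rightarrow> bool) \<Rightarrow> bool" where
  "acyclic_graph V E \<longleftrightarrow> \<not> (\<exists>xs. is_cycle V E xs)"

definition finite_tree :: "'a set \<Rightarrow> ('a \<Rightarrow> 'a \<Rightarrow> bool) \<Rightarrow> bool" where
  "finite_tree V E \<longleftrightarrow> finite V \<and> V \<noteq> {} \<and> simple_graph V E \<and> connected_graph V E \<and> acyclic_graph V E"

definition dist_le :: "'a set \<Rightarrow> ('a \<Rightarrow> 'a \<Rightarrow> bool) \<Rightarrow> 'a \<Rightarrow> 'a \<Rightarrow> nat \<Rightarrow> bool" where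
  "dist_le V E u v k \<longleftrightarrow> (\<exists>xs. walk V E xs u v \<and> length xs - 1 \<le> k)"

definition graph_power :: "'a set \<Rightarrow> ('a \<Rightarrow> 'a \<Rightarrow> bool) \<Rightarrow> nat \<Rightarrow> 'a \<Rightarrow> 'a \<Rightarrow> bool" where
  "graph_power V E k u v \<longleftrightarrow> u \<in> V \<and> v \<in> V \<and> u \<noteq> v \<and> dist_le V E u v k"

text \<open>The t-dimensional axis-parallel box with lower corner l and upper corner h
  (coordinates 0..t-1; requires l i \<le> h i, i.e. closed nonempty intervals).\<close>
definition box_set :: "nat \<Rightarrow> (nat \<Rightarrow> real) \<Rightarrow> (nat \<Rightarrow> real) \<Rightarrow> (nat \<Rightarrow> real) set" where
  "box_set t l h = {x. (\<forall>i<t. l i \<le> x i \<and> x i \<le> h i) \<and> (\<forall>i\<ge>t. x i = 0)}"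

definition box_representation :: "'a set \<Rightarrow> ('a \<Rightarrow> 'a \<Rightarrow> bool) \<Rightarrow> nat \<Rightarrow> bool" where
  "box_representation V E t \<longleftrightarrow>
     (\<exists>l h :: 'a \<Rightarrow> nat \<Rightarrow> real.
        (\<forall>v\<in>V. \<forall>i<t. l v i \<le> h v i) \<and>
        (\<forall>u\<in>V. \<forall>v\<in>V. u \<noteq> v \<longrightarrow>
            (E u v \<longleftrightarrow> box_set t (l u) (h u) \<inter> box_set t (l v) (h v) \<noteq> {})))"

definition boxicity :: "'a set \<Rightarrow> ('a \<Rightarrow> 'a \<Rightarrow> bool) \<Rightarrow> nat" where
  "boxicity V E = (LEAST t. box_representation V E t)"

end

theory Submission
  imports Defs
begin

text \<open>Root the tree and give every vertex v an interval [lo v, hi v] as in a depth-first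
  numbering, so that intervals are nested along the ancestor relation and disjoint otherwise.
  Two vertices u, v are at distance at most k iff the i-th ancestor of u equals the j-th
  ancestor of v for some i + j \<le> k. The box of v has the depth window [depth v, depth v + k] as
  coordinate 0 and, for 1 \<le> s \<le> k, the interval from lo of the (k - s)-th ancestor to hi of
  the (s - 1)-th ancestor as coordinate s. If u and v meet within k steps, in each coordinate
  one of the two relevant ancestors of one vertex is an ancestor of the other vertex, so the
  boxes meet. Otherwise, with w the deepest common ancestor, reached from u in i steps, either
  the depths differ by more than k or, for s = min i k, the (s - 1)-th ancestor of u and the
  (k - s)-th ancestor of v are incomparable; their disjoint intervals separate the boxes in
  coordinate s. The labelling itself is built by adding the leaves of the tree one at a time.\<close>

section \<open>Bounded reachability\<close>

fun reach :: "('a \<Rightarrow> 'a \<Rightarrow> bool) \<Rightarrow> nat \<Rightarrow> 'a \<Rightarrow> 'a \<Rightarrow> bool" where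
  "reach E 0 u v \<longleftrightarrow> u = v"
| "reach E (Suc m) u v \<longleftrightarrow> u = v \<or> (\<exists>w. E u w \<and> reach E m w v)"

lemma reach_refl [simp]: "reach E m u u"
  by (cases m) auto

lemma reach_Suc: "reach E m u v \<Longrightarrow> reach E (Suc m) u v"
  by (induction m arbitrary: u) auto

lemma reach_mono: "m \<le> m' \<Longrightarrow> reach E m u v \<Longrightarrow> reach E m' u v"
  by (induction m' rule: dec_induct) (simp_all del: reach.simps add: reach_Suc)

lemma reach_snoc: "reach E m u v \<Longrightarrow> E v w \<Longrightarrow> reach E (Suc m) u w"
  by (induction m arbitrary: u) auto

lemma reach_sym:
  assumes "\<And>x y. E x y \<Longrightarrow> E y x"
  shows "reach E m u v \<Longrightarrow> reach E m v u"
proof (induction m arbitrary: u)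
  case (Suc m)
  then show ?case by (metis assms reach.simps(2) reach_snoc)
qed simp

lemma reach_subrel: "reach E m u v \<Longrightarrow> (\<And>x y. E x y \<Longrightarrow> E' x y) \<Longrightarrow> reach E' m u v"
  by (induction m arbitrary: u) auto

lemma walk_iff_successively:
  "walk V E xs u v \<longleftrightarrow> xs \<noteq> [] \<and> hd xs = u \<and> last xs = v \<and> set xs \<subseteq> V \<and> successively E xs"
  unfolding walk_def successively_conv_nth by simp

lemma simple_graphD:
  "simple_graph V E \<Longrightarrow> E u v \<Longrightarrow> u \<in> V \<and> v \<in> V \<and> u \<noteq> v \<and> E v u"
  unfolding simple_graph_def by blast

lemma reach_of_successively:
  "xs \<noteq> [] \<Longrightarrow> successively E xs \<Longrightarrow> reach E (length xs - 1) (hd xs) (last xs)"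
  by (induction xs rule: induct_list012) auto

lemma walk_of_reach:
  assumes sg: "simple_graph V E" and "u \<in> V" and "reach E m u v"
  shows "\<exists>xs. walk V E xs u v \<and> length xs - 1 \<le> m"
  using assms(2,3)
proof (induction m arbitrary: u)
  case 0
  then show ?case by (intro exI[of _ "[u]"]) (auto simp: walk_iff_successively)
next
  case (Suc m)
  show ?case
  proof (cases "u = v")
    case True
    with Suc.prems show ?thesis by (intro exI[of _ "[u]"]) (auto simp: walk_iff_successively)
  next
    case False
    with Suc.prems obtain w where w: "E u w" "reach E m w v" by auto
    with sg have "w \<in> V" by (blast dest: simple_graphD)
    with Suc.IH w(2) obtain xs where xs: "walk V E xs w v" "length xs - 1 \<le> m" by blast
    then have "walk V E (u # xs) u v"
      using w(1) Suc.prems(1) by (auto simp: walk_iff_successively successively_Cons)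
    moreover have "length (u # xs) - 1 \<le> Suc m" using xs by (cases xs) auto
    ultimately show ?thesis by blast
  qed
qed

lemma dist_le_iff_reach:
  assumes "simple_graph V E" and "u \<in> V"
  shows "dist_le V E u v m \<longleftrightarrow> reach E m u v"
proof
  assume "dist_le V E u v m"
  then obtain xs where xs: "walk V E xs u v" "length xs - 1 \<le> m"
    unfolding dist_le_def by blast
  then have "reach E (length xs - 1) u v"
    using reach_of_successively[of xs E] by (auto simp: walk_iff_successively)
  with xs(2) show "reach E m u v" by (rule reach_mono)
qed (use walk_of_reach[OF assms] in \<open>auto simp: dist_le_def\<close>)

lemma connected_graph_reach:
  assumes "connected_graph V E" "u \<in> V" "v \<in> V"
  shows "\<exists>m. reach E m u v"
proof -
  from assms obtain xs where "walk V E xs u v" unfolding connected_graph_def by blast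
  then show ?thesis using reach_of_successively[of xs E] by (auto simp: walk_iff_successively)
qed

lemma is_cycle_drop:
  assumes "distinct xs" "successively E xs" "set xs \<subseteq> V"
    and "i + 3 \<le> length xs" "E (last xs) (xs ! i)"
  shows "is_cycle V E (drop i xs)"
  unfolding is_cycle_def walk_iff_successively
proof (intro conjI)
  show "successively E (drop i xs)"
    using assms(2) by (auto simp: successively_conv_nth)
  show "E (last (drop i xs)) (hd (drop i xs))"
    using assms(4,5) by (simp add: hd_drop_conv_nth)
qed (use assms in \<open>auto dest: in_set_dropD\<close>)

text \<open>The last vertex of a longest path is a leaf: another neighbour would either extend the
  path or close a cycle with it.\<close>
lemma finite_tree_has_leaf:
  assumes T: "finite_tree V E" and "u \<in> V" "v \<in> V" "u \<noteq> v"
  shows "\<exists>l q. l \<in> V \<and> E l q \<and> (\<forall>y. E l y \<longrightarrow> y = q)"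
proof -
  have fin: "finite V" and sg: "simple_graph V E" and con: "connected_graph V E"
    and ac: "acyclic_graph V E" using T unfolding finite_tree_def by auto
  obtain m where "reach E m u v" using connected_graph_reach[OF con assms(2,3)] by blast
  with \<open>u \<noteq> v\<close> obtain w where uw: "E u w" by (cases m) auto
  define path where
    "path xs \<longleftrightarrow> distinct xs \<and> successively E xs \<and> set xs \<subseteq> V \<and> 2 \<le> length xs" for xs
  have "path [u, w]" using simple_graphD[OF sg uw] uw unfolding path_def by auto
  moreover have "length xs < Suc (card V)" if "path xs" for xs
    using that distinct_card[of xs] card_mono[OF fin, of "set xs"] unfolding path_def by auto
  ultimately obtain xs where "path xs" and longest: "\<And>ys. path ys \<Longrightarrow> length ys \<le> length xs"
    using ex_has_greatest_nat[of path "[u, w]" length "Suc (card V)"] by blast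
  then have xs: "distinct xs" "successively E xs" "set xs \<subseteq> V" "2 \<le> length xs"
    unfolding path_def by auto
  define n l q where "n = length xs" and "l = last xs" and "q = xs ! (n - 2)"
  have l_nth: "l = xs ! (n - 1)" using xs(4) unfolding l_def n_def by (subst last_conv_nth) auto
  have "E q l"
    using successively_nth[OF xs(2), of "n - 2"] xs(4) unfolding l_nth q_def n_def
    by (simp add: Suc_diff_Suc numeral_2_eq_2)
  then have "E l q" using simple_graphD[OF sg] by blast
  moreover have "l \<in> V" using xs(3,4) last_in_set[of xs] unfolding l_def by fastforce
  moreover have "z = q" if lz: "E l z" for z
  proof -
    have "z \<in> set xs"
    proof (rule ccontr)
      assume "z \<notin> set xs"
      then have "path (xs @ [z])"
        using xs simple_graphD[OF sg lz] lz unfolding path_def l_def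
        by (auto simp: successively_append_iff)
      then show False using longest by fastforce
    qed
    then obtain i where i: "i < n" "xs ! i = z" unfolding n_def by (metis in_set_conv_nth)
    have "i \<noteq> n - 1" using i l_nth simple_graphD[OF sg lz] by auto
    show "z = q"
    proof (rule ccontr)
      assume "z \<noteq> q"
      with i \<open>i \<noteq> n - 1\<close> have "i + 3 \<le> n" unfolding q_def by (cases "i = n - 2") auto
      then have "is_cycle V E (drop i xs)"
        using is_cycle_drop[OF xs(1-3)] lz i(2) unfolding n_def l_def by blast
      with ac show False unfolding acyclic_graph_def by blast
    qed
  qed
  ultimately show ?thesis by blast
qed

definition remove_vertex :: "('a \<Rightarrow> 'a \<Rightarrow> bool) \<Rightarrow> 'a \<Rightarrow> 'a \<Rightarrow> 'a \<Rightarrow> bool" where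
  "remove_vertex E l x y \<longleftrightarrow> E x y \<and> x \<noteq> l \<and> y \<noteq> l"

text \<open>A walk between two vertices other than the leaf l that enters l must return at once to
  the neighbour it came from, so the detour through l can be cut out.\<close>
lemma reach_remove_leaf:
  assumes sg: "simple_graph V E" and leaf: "\<And>y. E l y \<Longrightarrow> y = q"
  shows "reach E m u v \<Longrightarrow> u \<noteq> l \<Longrightarrow> v \<noteq> l \<Longrightarrow> reach (remove_vertex E l) m u v"
proof (induction m arbitrary: u rule: less_induct)
  case (less m)
  show ?case
  proof (cases "u = v")
    case False
    with less.prems(1) obtain m' w where m: "m = Suc m'" and w: "E u w" "reach E m' w v"
      by (cases m) auto
    show ?thesis
    proof (cases "w = l")
      case False
      then have "reach (remove_vertex E l) m' w v" using less.IH[of m' w] m w(2) less.prems(3) by blast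
      moreover have "remove_vertex E l u w" using w(1) False less.prems(2) unfolding remove_vertex_def by blast
      ultimately show ?thesis unfolding m by auto
    next
      case True
      have "u = q" using leaf simple_graphD[OF sg w(1)] True by blast
      from w(2) True less.prems(3) obtain m'' w' where m': "m' = Suc m''" and "E l w'" "reach E m'' w' v"
        by (cases m') auto
      with \<open>u = q\<close> leaf have "reach E m'' u v" by blast
      with less.IH[of m'' u] less.prems(2,3) m m' have "reach (remove_vertex E l) m'' u v" by simp
      then show ?thesis using reach_mono[of m'' m] m m' by simp
    qed
  qed simp
qed

lemma reach_from_leaf:
  assumes sg: "simple_graph V E" and lq: "E l q" and leaf: "\<And>y. E l y \<Longrightarrow> y = q" and "v \<noteq> l"
  shows "reach E m l v \<longleftrightarrow> (\<exists>m'. m = Suc m' \<and> reach (remove_vertex E l) m' q v)"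
proof
  assume "reach E m l v"
  with \<open>v \<noteq> l\<close> obtain m' w where m: "m = Suc m'" and w: "E l w" "reach E m' w v"
    by (cases m) auto
  moreover have "q \<noteq> l" using simple_graphD[OF sg lq] by blast
  ultimately show "\<exists>m'. m = Suc m' \<and> reach (remove_vertex E l) m' q v"
    using reach_remove_leaf[OF sg leaf] leaf \<open>v \<noteq> l\<close> by blast
next
  assume "\<exists>m'. m = Suc m' \<and> reach (remove_vertex E l) m' q v"
  then obtain m' where "m = Suc m'" "reach (remove_vertex E l) m' q v" by blast
  then show "reach E m l v"
    using lq reach_subrel[of "remove_vertex E l" m' q v E] by (auto simp: remove_vertex_def)
qed

lemma finite_tree_remove_leaf:
  assumes T: "finite_tree V E" and lq: "E l q" and leaf: "\<And>y. E l y \<Longrightarrow> y = q"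
  shows "finite_tree (V - {l}) (remove_vertex E l)"
proof -
  have fin: "finite V" and sg: "simple_graph V E" and con: "connected_graph V E"
    and ac: "acyclic_graph V E" using T unfolding finite_tree_def by auto
  have "q \<in> V - {l}" using simple_graphD[OF sg lq] by blast
  moreover have sg': "simple_graph (V - {l}) (remove_vertex E l)"
    using sg unfolding simple_graph_def remove_vertex_def by blast
  moreover have "connected_graph (V - {l}) (remove_vertex E l)"
    unfolding connected_graph_def
  proof (intro ballI)
    fix u v assume u: "u \<in> V - {l}" and v: "v \<in> V - {l}"
    obtain m where "reach E m u v" using connected_graph_reach[OF con] u v by blast
    then have "reach (remove_vertex E l) m u v" using reach_remove_leaf[OF sg leaf] u v by blast
    then show "\<exists>xs. walk (V - {l}) (remove_vertex E l) xs u v" using walk_of_reach[OF sg' u] by blast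
  qed
  moreover have "acyclic_graph (V - {l}) (remove_vertex E l)"
  proof -
    have "is_cycle V E xs" if "is_cycle (V - {l}) (remove_vertex E l) xs" for xs
      using that successively_mono[of "remove_vertex E l" xs E]
      unfolding is_cycle_def walk_iff_successively remove_vertex_def by blast
    then show ?thesis using ac unfolding acyclic_graph_def by blast
  qed
  ultimately show ?thesis using fin unfolding finite_tree_def by blast
qed

definition ancestor :: "('a \<Rightarrow> 'a) \<Rightarrow> 'a \<Rightarrow> 'a \<Rightarrow> bool" where
  "ancestor par x v \<longleftrightarrow> (\<exists>i. (par ^^ i) v = x)"

definition meet_within :: "('a \<Rightarrow> 'a) \<Rightarrow> nat \<Rightarrow> 'a \<Rightarrow> 'a \<Rightarrow> bool" where
  "meet_within par m u v \<longleftrightarrow> (\<exists>i j. i + j \<le> m \<and> (par ^^ i) u = (par ^^ j) v)"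

lemma ancestor_refl [simp]: "ancestor par v v"
  unfolding ancestor_def by (rule exI[of _ 0]) simp

lemma ancestor_funpow [simp]: "ancestor par ((par ^^ i) v) v"
  unfolding ancestor_def by blast

lemma funpow_le_split: "i \<le> n \<Longrightarrow> (f ^^ n) x = (f ^^ (n - i)) ((f ^^ i) x)"
  by (metis funpow_add le_add_diff_inverse2 o_apply)

lemma ancestor_trans: "ancestor par x y \<Longrightarrow> ancestor par y v \<Longrightarrow> ancestor par x v"
  unfolding ancestor_def by (metis funpow_add o_apply)

lemma meet_within_refl [simp]: "meet_within par m v v"
  unfolding meet_within_def by (rule exI[of _ 0], rule exI[of _ 0]) simp

lemma meet_within_sym: "meet_within par m u v \<longleftrightarrow> meet_within par m v u"
  unfolding meet_within_def by (metis add.commute)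

context
  fixes W :: "'a set" and par :: "'a \<Rightarrow> 'a" and l q :: 'a
  assumes par_in: "par ` W \<subseteq> W" and l_notin: "l \<notin> W" and q_in: "q \<in> W"
begin

lemma funpow_fun_upd_in:
  "v \<in> W \<Longrightarrow> (par(l := q) ^^ i) v = (par ^^ i) v \<and> (par ^^ i) v \<in> W"
  by (induction i) (use par_in l_notin in auto)

lemma funpow_fun_upd_leaf: "(par(l := q) ^^ Suc i) l = (par ^^ i) q"
  using funpow_fun_upd_in[OF q_in, of i] by (simp add: funpow_Suc_right del: funpow.simps)

lemma ancestor_fun_upd:
  "x \<in> W \<Longrightarrow> v \<in> W \<Longrightarrow> ancestor (par(l := q)) x v \<longleftrightarrow> ancestor par x v"
  unfolding ancestor_def using funpow_fun_upd_in by simp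

lemma ancestor_fun_upd_of_leaf:
  assumes "x \<in> W"
  shows "ancestor (par(l := q)) x l \<longleftrightarrow> ancestor par x q"
proof
  assume "ancestor (par(l := q)) x l"
  then obtain i where "(par(l := q) ^^ i) l = x" unfolding ancestor_def by blast
  with assms l_notin show "ancestor par x q"
    using funpow_fun_upd_leaf unfolding ancestor_def by (cases i) auto
next
  assume "ancestor par x q"
  then obtain i where "(par ^^ i) q = x" unfolding ancestor_def by blast
  then show "ancestor (par(l := q)) x l"
    unfolding ancestor_def using funpow_fun_upd_leaf by blast
qed

lemma not_ancestor_fun_upd_leaf: "v \<in> W \<Longrightarrow> \<not> ancestor (par(l := q)) l v"
  unfolding ancestor_def using funpow_fun_upd_in l_notin by auto

lemma meet_within_fun_upd:
  "u \<in> W \<Longrightarrow> v \<in> W \<Longrightarrow> meet_within (par(l := q)) m u v \<longleftrightarrow> meet_within par m u v"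
  unfolding meet_within_def using funpow_fun_upd_in by simp

lemma meet_within_fun_upd_leaf:
  assumes "v \<in> W"
  shows "meet_within (par(l := q)) m l v \<longleftrightarrow> (\<exists>m'. m = Suc m' \<and> meet_within par m' q v)"
proof
  assume "meet_within (par(l := q)) m l v"
  then obtain i j where ij: "i + j \<le> m" "(par(l := q) ^^ i) l = (par(l := q) ^^ j) v"
    unfolding meet_within_def by blast
  have outside: "(par(l := q) ^^ j) v = (par ^^ j) v" "(par ^^ j) v \<noteq> l"
    using funpow_fun_upd_in[OF assms, of j] l_notin by auto
  then obtain i' where i: "i = Suc i'" using ij(2) by (cases i) auto
  then have "(par ^^ i') q = (par ^^ j) v" using ij(2) outside(1) funpow_fun_upd_leaf by simp
  with ij(1) i have "meet_within par (m - 1) q v"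
    unfolding meet_within_def by (intro exI[of _ i'] exI[of _ j]) simp
  with ij(1) i show "\<exists>m'. m = Suc m' \<and> meet_within par m' q v" by (intro exI[of _ "m - 1"]) auto
next
  assume "\<exists>m'. m = Suc m' \<and> meet_within par m' q v"
  then obtain m' i j where "m = Suc m'" "i + j \<le> m'" "(par ^^ i) q = (par ^^ j) v"
    unfolding meet_within_def by blast
  then show "meet_within (par(l := q)) m l v"
    unfolding meet_within_def using funpow_fun_upd_leaf funpow_fun_upd_in[OF assms]
    by (intro exI[of _ "Suc i"] exI[of _ j]) auto
qed

end

locale rooted_tree =
  fixes V :: "'a set" and root :: 'a and par :: "'a \<Rightarrow> 'a" and depth :: "'a \<Rightarrow> nat"
  assumes root_in: "root \<in> V"
    and par_in: "v \<in> V \<Longrightarrow> par v \<in> V"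
    and par_root: "par root = root"
    and depth_root: "depth root = 0"
    and depth_par: "v \<in> V \<Longrightarrow> v \<noteq> root \<Longrightarrow> depth v = Suc (depth (par v))"
begin

lemma funpow_par_in: "v \<in> V \<Longrightarrow> (par ^^ i) v \<in> V"
  by (induction i) (simp_all add: par_in)

lemma depth_funpow_par: "v \<in> V \<Longrightarrow> depth ((par ^^ i) v) = depth v - i"
proof (induction i)
  case (Suc i)
  have "depth (par w) = depth w - 1" if "w \<in> V" for w
    using that depth_par par_root depth_root by (cases "w = root") auto
  with Suc funpow_par_in show ?case by simp
qed simp

lemma depth_eq_0_iff: "v \<in> V \<Longrightarrow> depth v = 0 \<longleftrightarrow> v = root"
  using depth_par depth_root by fastforce

lemma funpow_par_depth: "v \<in> V \<Longrightarrow> depth v \<le> i \<Longrightarrow> (par ^^ i) v = root"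
  using depth_eq_0_iff[OF funpow_par_in] depth_funpow_par by simp

lemma ancestor_in: "v \<in> V \<Longrightarrow> ancestor par x v \<Longrightarrow> x \<in> V"
  using funpow_par_in unfolding ancestor_def by blast

lemma ancestor_root: "v \<in> V \<Longrightarrow> ancestor par root v"
  using funpow_par_depth unfolding ancestor_def by blast

lemma ancestor_depth:
  assumes "v \<in> V" "ancestor par x v"
  shows "x = (par ^^ (depth v - depth x)) v" and "depth x \<le> depth v"
proof -
  obtain i where i: "(par ^^ i) v = x" using assms(2) unfolding ancestor_def by blast
  then have dx: "depth x = depth v - i" using depth_funpow_par[OF assms(1)] by blast
  then show "depth x \<le> depth v" by simp
  show "x = (par ^^ (depth v - depth x)) v"
    using i dx funpow_par_depth[OF assms(1)] by (cases "i \<le> depth v") auto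
qed

lemma deepest_common_ancestor:
  assumes "u \<in> V" "v \<in> V"
  obtains w where "w \<in> V" "ancestor par w u" "ancestor par w v"
    and "\<And>y. ancestor par y u \<Longrightarrow> ancestor par y v \<Longrightarrow> depth y \<le> depth w"
proof -
  define common where "common y \<longleftrightarrow> ancestor par y u \<and> ancestor par y v" for y
  have "common root" using ancestor_root assms unfolding common_def by blast
  moreover have "depth y < Suc (depth u)" if "common y" for y
    using ancestor_depth(2)[OF assms(1)] that unfolding common_def by fastforce
  ultimately obtain w where "common w" "\<And>y. common y \<Longrightarrow> depth y \<le> depth w"
    using ex_has_greatest_nat[of common root depth "Suc (depth u)"] by blast
  moreover have "w \<in> V"
    using \<open>common w\<close> funpow_par_in[OF assms(1)] unfolding common_def ancestor_def by blast
  ultimately show ?thesis using that unfolding common_def by blast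
qed

lemma insert_leaf:
  assumes "l \<notin> V" "q \<in> V"
  shows "rooted_tree (insert l V) root (par(l := q)) (depth(l := Suc (depth q)))"
proof
  fix v assume "v \<in> insert l V" "v \<noteq> root"
  with assms depth_par par_in
  show "(depth(l := Suc (depth q))) v = Suc ((depth(l := Suc (depth q))) ((par(l := q)) v))"
    by (cases "v = l") auto
qed (use assms root_in par_in par_root depth_root in auto)

end

lemma rooted_tree_singleton: "rooted_tree {r} r (\<lambda>_. r) (\<lambda>_. 0)"
  by unfold_locales auto

section \<open>Nested interval labellings\<close>

lemma finite_gap_below:
  fixes S :: "real set" and b :: real
  assumes "finite S"
  obtains a c where "a < c" "c < b" "\<And>t. t \<in> S \<Longrightarrow> t < b \<Longrightarrow> t < a"
proof -
  define M where "M = Max (insert (b - 1) {t \<in> S. t < b})"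
  have fin: "finite (insert (b - 1) {t \<in> S. t < b})" using assms by simp
  have "M < b" unfolding M_def using Max_in[OF fin] by auto
  moreover have "t \<le> M" if "t \<in> S" "t < b" for t unfolding M_def using Max_ge[OF fin] that by blast
  ultimately show ?thesis
    by (intro that[of "(2 * M + b) / 3" "(M + 2 * b) / 3"]) force+
qed

locale nested_intervals =
  fixes V :: "'a set" and contains :: "'a \<Rightarrow> 'a \<Rightarrow> bool" and lo hi :: "'a \<Rightarrow> real"
  assumes lo_less_hi: "v \<in> V \<Longrightarrow> lo v < hi v"
    and contains_iff: "x \<in> V \<Longrightarrow> v \<in> V \<Longrightarrow> contains x v \<longleftrightarrow> lo x \<le> lo v \<and> lo v \<le> hi x"
    and hi_less_hi: "x \<in> V \<Longrightarrow> v \<in> V \<Longrightarrow> contains x v \<Longrightarrow> x \<noteq> v \<Longrightarrow> hi v < hi x"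
    and disjoint: "x \<in> V \<Longrightarrow> y \<in> V \<Longrightarrow> \<not> contains x y \<Longrightarrow> \<not> contains y x \<Longrightarrow> hi x < lo y \<or> hi y < lo x"
begin

lemma contains_iff_hi:
  assumes "x \<in> V" "q \<in> V"
  shows "contains x q \<longleftrightarrow> lo x < hi q \<and> hi q \<le> hi x"
proof
  assume "contains x q"
  then show "lo x < hi q \<and> hi q \<le> hi x"
    using assms contains_iff lo_less_hi hi_less_hi by (cases "x = q") fastforce+
next
  assume x: "lo x < hi q \<and> hi q \<le> hi x"
  have "\<not> contains q x \<or> x = q" using hi_less_hi assms x by fastforce
  moreover have "\<not> (hi x < lo q \<or> hi q < lo x)" using x lo_less_hi assms by fastforce
  ultimately show "contains x q" using disjoint assms contains_iff by blast
qed

text \<open>A new interval is placed immediately to the left of the right end of q's interval, in a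
  gap free of all endpoints: it then lies inside exactly the intervals that contain q's, and
  contains no other.\<close>
lemma insert_child:
  assumes q: "q \<in> V" and l: "l \<notin> V"
    and old: "\<And>x v. x \<in> V \<Longrightarrow> v \<in> V \<Longrightarrow> contains' x v \<longleftrightarrow> contains x v"
    and above: "\<And>x. x \<in> V \<Longrightarrow> contains' x l \<longleftrightarrow> contains x q"
    and below: "\<And>v. v \<in> V \<Longrightarrow> \<not> contains' l v"
    and "contains' l l"
    and "finite V"
  obtains lo' hi' where "nested_intervals (insert l V) contains' lo' hi'"
proof -
  obtain a c where ac: "a < c" "c < hi q"
    and gap: "\<And>t. t \<in> lo ` V \<union> hi ` V \<Longrightarrow> t < hi q \<Longrightarrow> t < a"
    using finite_gap_below[of "lo ` V \<union> hi ` V" "hi q"] \<open>finite V\<close> by blast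
  have lo_gap: "lo v < hi q \<Longrightarrow> lo v < a" and hi_gap: "hi v < hi q \<Longrightarrow> hi v < a" if "v \<in> V" for v
    using gap that by auto
  have contains_new: "contains x q \<longleftrightarrow> lo x \<le> a \<and> a \<le> hi x" if "x \<in> V" for x
    using contains_iff_hi[OF that q] lo_gap[OF that] hi_gap[OF that] ac by force
  have "nested_intervals (insert l V) contains' (lo(l := a)) (hi(l := c))"
  proof
    fix v assume "v \<in> insert l V"
    then show "(lo(l := a)) v < (hi(l := c)) v" using ac lo_less_hi l by auto
  next
    fix x v assume x: "x \<in> insert l V" and v: "v \<in> insert l V"
    show "contains' x v \<longleftrightarrow> (lo(l := a)) x \<le> (lo(l := a)) v \<and> (lo(l := a)) v \<le> (hi(l := c)) x"
    proof (cases "x = l"; cases "v = l")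
      assume "x = l" "v \<noteq> l"
      with v below lo_gap[of v] ac show ?thesis by force
    next
      assume "x \<noteq> l" "v = l"
      with x above contains_new l show ?thesis by auto
    next
      assume "x \<noteq> l" "v \<noteq> l"
      with x v old contains_iff show ?thesis by auto
    qed (use \<open>contains' l l\<close> ac in simp)
  next
    fix x v assume x: "x \<in> insert l V" and v: "v \<in> insert l V" and "contains' x v" "x \<noteq> v"
    show "(hi(l := c)) v < (hi(l := c)) x"
    proof (cases "x = l"; cases "v = l")
      assume "x \<noteq> l" "v = l"
      with x \<open>contains' x v\<close> above contains_iff_hi q ac show ?thesis by force
    next
      assume "x \<noteq> l" "v \<noteq> l"
      with x v \<open>contains' x v\<close> \<open>x \<noteq> v\<close> old hi_less_hi show ?thesis by auto
    qed (use v below \<open>contains' x v\<close> \<open>x \<noteq> v\<close> in auto)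
  next
    have new: "c < lo y \<or> hi y < a" if "y \<in> V" "\<not> contains' y l" for y
      using that above contains_new lo_gap[of y] ac by force
    fix x y assume x: "x \<in> insert l V" and y: "y \<in> insert l V"
      and "\<not> contains' x y" "\<not> contains' y x"
    then show "(hi(l := c)) x < (lo(l := a)) y \<or> (hi(l := c)) y < (lo(l := a)) x"
    proof (cases "x = l"; cases "y = l")
      assume "x = l" "y \<noteq> l"
      with y \<open>\<not> contains' y x\<close> new show ?thesis by auto
    next
      assume "x \<noteq> l" "y = l"
      with x \<open>\<not> contains' x y\<close> new show ?thesis by auto
    next
      assume "x \<noteq> l" "y \<noteq> l"
      with x y \<open>\<not> contains' x y\<close> \<open>\<not> contains' y x\<close> old disjoint show ?thesis by auto
    qed (use \<open>contains' l l\<close> in simp)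
  qed
  then show ?thesis using that by blast
qed

end

section \<open>Labelling a finite tree\<close>

definition distances_by_ancestors :: "'a set \<Rightarrow> ('a \<Rightarrow> 'a \<Rightarrow> bool) \<Rightarrow> ('a \<Rightarrow> 'a) \<Rightarrow> bool" where
  "distances_by_ancestors V E par \<longleftrightarrow> (\<forall>u\<in>V. \<forall>v\<in>V. \<forall>m. reach E m u v \<longleftrightarrow> meet_within par m u v)"

lemma distances_by_ancestors_insert_leaf:
  assumes sg: "simple_graph V E" and lq: "E l q" and leaf: "\<And>y. E l y \<Longrightarrow> y = q"
    and par_in: "par ` (V - {l}) \<subseteq> V - {l}"
    and old: "distances_by_ancestors (V - {l}) (remove_vertex E l) par"
  shows "distances_by_ancestors V E (par(l := q))"
proof -
  have q: "q \<in> V - {l}" using simple_graphD[OF sg lq] by blast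
  have l_notin: "l \<notin> V - {l}" by blast
  note par_upd = meet_within_fun_upd[OF par_in l_notin q] meet_within_fun_upd_leaf[OF par_in l_notin q]
  have away: "reach E m u v \<longleftrightarrow> meet_within (par(l := q)) m u v" if "u \<in> V - {l}" "v \<in> V - {l}" for m u v
  proof -
    have "reach E m u v \<longleftrightarrow> reach (remove_vertex E l) m u v"
      using reach_remove_leaf[OF sg leaf] reach_subrel[of "remove_vertex E l" m u v E] that
      unfolding remove_vertex_def by blast
    with old par_upd(1) that show ?thesis unfolding distances_by_ancestors_def by blast
  qed
  have from_leaf: "reach E m l v \<longleftrightarrow> meet_within (par(l := q)) m l v" if "v \<in> V - {l}" for m v
    using reach_from_leaf[OF sg lq leaf, of v m] old q that par_upd(2)
    unfolding distances_by_ancestors_def by auto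
  have sym: "reach E m u v \<longleftrightarrow> reach E m v u" for m u v
    using reach_sym[of E m] simple_graphD[OF sg] by blast
  have at_leaf: "reach E m l l \<longleftrightarrow> meet_within (par(l := q)) m l l" for m
    by simp
  show ?thesis
    unfolding distances_by_ancestors_def
  proof (intro ballI allI)
    fix u v m assume "u \<in> V" "v \<in> V"
    then consider "u \<in> V - {l}" "v \<in> V - {l}" | "u = l" "v \<in> V - {l}" | "u \<in> V - {l}" "v = l"
      | "u = l" "v = l" by blast
    then show "reach E m u v \<longleftrightarrow> meet_within (par(l := q)) m u v"
    proof cases
      case 3
      then show ?thesis using from_leaf[of u m] sym[of m u l] meet_within_sym[of _ m u l] by simp
    qed (use away from_leaf at_leaf in auto)
  qed
qed

locale labelled_tree = rooted_tree V root par depth + nested_intervals V "ancestor par" lo hi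
  for V root par depth lo hi

lemma finite_tree_labelled:
  assumes "finite_tree V E"
  shows "\<exists>root par depth lo hi. labelled_tree V root par depth lo hi \<and> distances_by_ancestors V E par"
  using assms
proof (induction "card V" arbitrary: V E rule: less_induct)
  case less
  have fin: "finite V" and sg: "simple_graph V E" and "V \<noteq> {}"
    using less.prems unfolding finite_tree_def by auto
  show ?case
  proof (cases "\<exists>u\<in>V. \<exists>v\<in>V. u \<noteq> v")
    case True
    then obtain l q where l: "l \<in> V" and lq: "E l q" and leaf: "\<And>y. E l y \<Longrightarrow> y = q"
      using finite_tree_has_leaf[OF less.prems] by blast
    have "card (V - {l}) < card V" by (rule card_Diff1_less[OF fin l])
    with less.hyps finite_tree_remove_leaf[OF less.prems lq leaf]
    obtain root par depth lo hi where
      "labelled_tree (V - {l}) root par depth lo hi"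
      and dist: "distances_by_ancestors (V - {l}) (remove_vertex E l) par" by blast
    then interpret old: labelled_tree "V - {l}" root par depth lo hi by simp
    have q: "q \<in> V - {l}" and l_notin: "l \<notin> V - {l}" using simple_graphD[OF sg lq] by auto
    have par_in: "par ` (V - {l}) \<subseteq> V - {l}" using old.par_in by blast
    have V: "insert l (V - {l}) = V" using l by blast
    obtain lo' hi' where "nested_intervals (insert l (V - {l})) (ancestor (par(l := q))) lo' hi'"
      using old.insert_child[OF q l_notin ancestor_fun_upd[OF par_in l_notin q]
          ancestor_fun_upd_of_leaf[OF par_in l_notin q] not_ancestor_fun_upd_leaf[OF par_in l_notin q]
          ancestor_refl] fin by blast
    then have "nested_intervals V (ancestor (par(l := q))) lo' hi'" using V by simp
    moreover have "rooted_tree V root (par(l := q)) (depth(l := Suc (depth q)))"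
      using old.insert_leaf[OF l_notin q] V by simp
    moreover have "distances_by_ancestors V E (par(l := q))"
      using distances_by_ancestors_insert_leaf[OF sg lq leaf par_in dist] .
    ultimately show ?thesis unfolding labelled_tree_def by blast
  next
    case False
    with \<open>V \<noteq> {}\<close> obtain r where V: "V = {r}" by blast
    have "nested_intervals {r} (ancestor (\<lambda>_. r)) (\<lambda>_. 0) (\<lambda>_. 1)"
      by unfold_locales auto
    moreover have "distances_by_ancestors {r} E (\<lambda>_. r)"
      unfolding distances_by_ancestors_def by auto
    ultimately show ?thesis
      using rooted_tree_singleton[of r] V unfolding labelled_tree_def by (intro exI conjI) simp_all
  qed
qed

section \<open>The box representation\<close>

lemma box_set_inter_iff:
  assumes "\<forall>i<t. l i \<le> h i" "\<forall>i<t. l' i \<le> h' i"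
  shows "box_set t l h \<inter> box_set t l' h' \<noteq> {} \<longleftrightarrow> (\<forall>i<t. l i \<le> h' i \<and> l' i \<le> h i)"
proof
  assume "box_set t l h \<inter> box_set t l' h' \<noteq> {}"
  then show "\<forall>i<t. l i \<le> h' i \<and> l' i \<le> h i" unfolding box_set_def by force
next
  assume "\<forall>i<t. l i \<le> h' i \<and> l' i \<le> h i"
  then have "(\<lambda>i. if i < t then max (l i) (l' i) else 0) \<in> box_set t l h \<inter> box_set t l' h'"
    using assms unfolding box_set_def by auto
  then show "box_set t l h \<inter> box_set t l' h' \<noteq> {}" by blast
qed

context labelled_tree
begin

lemma ancestor_interval: "v \<in> V \<Longrightarrow> ancestor par x v \<Longrightarrow> lo x \<le> lo v \<and> lo v \<le> hi x"
  using contains_iff[OF ancestor_in] by blast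

definition box_lo :: "nat \<Rightarrow> 'a \<Rightarrow> nat \<Rightarrow> real" where
  "box_lo k v s = (if s = 0 then real (depth v) else lo ((par ^^ (k - s)) v))"

definition box_hi :: "nat \<Rightarrow> 'a \<Rightarrow> nat \<Rightarrow> real" where
  "box_hi k v s = (if s = 0 then real (depth v + k) else hi ((par ^^ (s - 1)) v))"

lemma box_lo_le_box_hi:
  assumes "v \<in> V"
  shows "box_lo k v s \<le> box_hi k v s"
proof -
  have "lo ((par ^^ (k - s)) v) \<le> lo v" "lo v \<le> hi ((par ^^ (s - 1)) v)"
    using ancestor_interval[OF assms ancestor_funpow] by simp_all
  then show ?thesis unfolding box_lo_def box_hi_def by simp
qed

lemma meet_within_imp_boxes_meet:
  assumes u: "u \<in> V" and v: "v \<in> V" and "lo u \<le> lo v" and "meet_within par k u v"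
    and "s \<le> k"
  shows "box_lo k u s \<le> box_hi k v s \<and> box_lo k v s \<le> box_hi k u s"
proof -
  obtain i j where ij: "i + j \<le> k" and w: "(par ^^ i) u = (par ^^ j) v"
    using \<open>meet_within par k u v\<close> unfolding meet_within_def by blast
  show ?thesis
  proof (cases "s = 0")
    case True
    have "depth u - i = depth v - j" using arg_cong[OF w, of depth] by (simp add: depth_funpow_par u v)
    with ij True show ?thesis unfolding box_lo_def box_hi_def by auto
  next
    case False
    let ?a = "\<lambda>x. (par ^^ (k - s)) x" and ?b = "\<lambda>x. (par ^^ (s - 1)) x"
    have "lo (?a u) \<le> hi (?b v)"
      using ancestor_interval[OF u ancestor_funpow] ancestor_interval[OF v ancestor_funpow] \<open>lo u \<le> lo v\<close>
      by (meson order_trans)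
    moreover have "lo (?a v) \<le> hi (?b u)"
    proof (cases "i \<le> s - 1")
      case True
      then have "?b u = (par ^^ (s - 1 - i)) ((par ^^ j) v)"
        using w funpow_le_split[OF True, of par u] by simp
      then have "ancestor par (?b u) v" using ancestor_trans ancestor_funpow by metis
      then have "lo v \<le> hi (?b u)" using ancestor_interval[OF v] by simp
      then show ?thesis using ancestor_interval[OF v ancestor_funpow, of "k - s"] by simp
    next
      case False
      then have "j \<le> k - s" using ij \<open>s \<noteq> 0\<close> by linarith
      then have "?a v = (par ^^ (k - s - j)) ((par ^^ i) u)"
        using w funpow_le_split[of j "k - s" par v] by simp
      then have "ancestor par (?a v) u" using ancestor_trans ancestor_funpow by metis
      then have "lo (?a v) \<le> lo u" using ancestor_interval[OF u] by simp
      then show ?thesis using ancestor_interval[OF u ancestor_funpow, of "s - 1"] by simp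
    qed
    ultimately show ?thesis using False unfolding box_lo_def box_hi_def by simp
  qed
qed

lemma boxes_separated_if_not_meet_within:
  assumes u: "u \<in> V" and v: "v \<in> V" and "lo u \<le> lo v" and "1 \<le> k"
    and no_meet: "\<not> meet_within par k u v"
  shows "\<exists>s\<le>k. box_hi k u s < box_lo k v s \<or> box_hi k v s < box_lo k u s"
proof -
  obtain w where w: "w \<in> V" "ancestor par w u" "ancestor par w v"
    and deepest: "\<And>y. ancestor par y u \<Longrightarrow> ancestor par y v \<Longrightarrow> depth y \<le> depth w"
    using deepest_common_ancestor[OF u v] by blast
  define i j where "i = depth u - depth w" and "j = depth v - depth w"
  have "w = (par ^^ i) u" "w = (par ^^ j) v" "depth w \<le> depth u" "depth w \<le> depth v"
    using ancestor_depth u v w unfolding i_def j_def by blast+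
  with no_meet have "k < i + j" unfolding meet_within_def by force
  consider "i = 0" | "j = 0" | "0 < i" "0 < j" by blast
  then show ?thesis
  proof cases
    case 1
    with \<open>k < i + j\<close> have "box_hi k u 0 < box_lo k v 0"
      unfolding box_lo_def box_hi_def i_def j_def by simp
    then show ?thesis by blast
  next
    case 2
    with \<open>k < i + j\<close> have "box_hi k v 0 < box_lo k u 0"
      unfolding box_lo_def box_hi_def i_def j_def by simp
    then show ?thesis by blast
  next
    case 3
    define s where "s = min i k"
    define X Y where "X = (par ^^ (s - 1)) u" and "Y = (par ^^ (k - s)) v"
    have s: "1 \<le> s" "s \<le> k" using 3 \<open>1 \<le> k\<close> unfolding s_def by auto
    have XV: "X \<in> V" and YV: "Y \<in> V" using funpow_par_in u v unfolding X_def Y_def by auto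
    have "depth w < depth X" "depth w < depth Y"
      using depth_funpow_par u v \<open>k < i + j\<close> 3 s unfolding X_def Y_def s_def i_def j_def by auto
    moreover have ancX: "ancestor par X u" and ancY: "ancestor par Y v"
      unfolding X_def Y_def by simp_all
    ultimately have "\<not> ancestor par X v" "\<not> ancestor par Y u"
      using deepest[OF ancX] deepest[OF _ ancY] by auto
    then have "\<not> ancestor par X Y" "\<not> ancestor par Y X"
      using ancestor_trans[OF _ ancY] ancestor_trans[OF _ ancX] by blast+
    then have "hi X < lo Y \<or> hi Y < lo X"
      using disjoint[OF XV YV] by blast
    moreover have "lo X \<le> hi Y"
      using ancestor_interval[OF u ancX] ancestor_interval[OF v ancY] \<open>lo u \<le> lo v\<close> by linarith
    ultimately have "box_hi k u s < box_lo k v s"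
      using s unfolding box_lo_def box_hi_def X_def Y_def by auto
    then show ?thesis using s by blast
  qed
qed

lemma meet_within_iff_boxes_meet:
  assumes "u \<in> V" "v \<in> V" "1 \<le> k"
  shows "meet_within par k u v \<longleftrightarrow> (\<forall>s<Suc k. box_lo k u s \<le> box_hi k v s \<and> box_lo k v s \<le> box_hi k u s)"
proof -
  have ordered: "meet_within par k u v \<longleftrightarrow>
      (\<forall>s<Suc k. box_lo k u s \<le> box_hi k v s \<and> box_lo k v s \<le> box_hi k u s)"
    if "u \<in> V" "v \<in> V" "lo u \<le> lo v" for u v
  proof
    show "\<forall>s<Suc k. box_lo k u s \<le> box_hi k v s \<and> box_lo k v s \<le> box_hi k u s"
      if "meet_within par k u v"
      using meet_within_imp_boxes_meet[OF \<open>u \<in> V\<close> \<open>v \<in> V\<close> \<open>lo u \<le> lo v\<close> that] by simp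
    show "meet_within par k u v"
      if "\<forall>s<Suc k. box_lo k u s \<le> box_hi k v s \<and> box_lo k v s \<le> box_hi k u s"
      using boxes_separated_if_not_meet_within[OF \<open>u \<in> V\<close> \<open>v \<in> V\<close> \<open>lo u \<le> lo v\<close> \<open>1 \<le> k\<close>] that
      by (meson less_Suc_eq_le not_le)
  qed
  show ?thesis
  proof (cases "lo u \<le> lo v")
    case False
    then show ?thesis using ordered[of v u] assms meet_within_sym[of par k u v] by auto
  qed (use ordered assms in blast)
qed

lemma box_representation_graph_power:
  assumes sg: "simple_graph V E" and dist: "distances_by_ancestors V E par" and "1 \<le> k"
  shows "box_representation V (graph_power V E k) (Suc k)"
proof -
  have "graph_power V E k u v \<longleftrightarrow>
      box_set (Suc k) (box_lo k u) (box_hi k u) \<inter> box_set (Suc k) (box_lo k v) (box_hi k v) \<noteq> {}"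
    if "u \<in> V" "v \<in> V" "u \<noteq> v" for u v
  proof -
    have "graph_power V E k u v \<longleftrightarrow> meet_within par k u v"
      using that dist dist_le_iff_reach[OF sg] unfolding graph_power_def distances_by_ancestors_def
      by blast
    also have "\<dots> \<longleftrightarrow> (\<forall>s<Suc k. box_lo k u s \<le> box_hi k v s \<and> box_lo k v s \<le> box_hi k u s)"
      using meet_within_iff_boxes_meet that \<open>1 \<le> k\<close> by blast
    finally show ?thesis using box_set_inter_iff box_lo_le_box_hi that by blast
  qed
  then show ?thesis unfolding box_representation_def using box_lo_le_box_hi by blast
qed

end

theorem theorem1:
  fixes V :: "'a set" and E :: "'a \<Rightarrow> 'a \<Rightarrow> bool" and k :: nat
  assumes "finite_tree V E" and "k \<ge> 1"
  shows "boxicity V (graph_power V E k) \<le> k + 1"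
proof -
  obtain root par depth lo hi where labelled: "labelled_tree V root par depth lo hi"
    and dist: "distances_by_ancestors V E par"
    using finite_tree_labelled[OF assms(1)] by blast
  have "simple_graph V E" using assms(1) unfolding finite_tree_def by blast
  then have "box_representation V (graph_power V E k) (Suc k)"
    using labelled_tree.box_representation_graph_power[OF labelled _ dist assms(2)] by blast
  then show ?thesis unfolding boxicity_def by (simp add: Least_le)
qed

end
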